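(* Let $S$ be a semigroup with finite $\mathcal{R}$-height, and let $A$ be a right ideal of $S$. Then $\mathrm{H}_{\mathcal{R}}(A)\leq 2\,\mathrm{H}_{\mathcal{R}}(S)-1$.
   Context: For a semigroup $S$, $S^1$ denotes $S$ with an identity adjoined if necessary. Green's preorder: $a\leq_{\mathcal{R}} b$ iff $aS^1\subseteq bS^1$; $\mathcal{R}$ is the associated equivalence; the $\mathcal{R}$-height $\mathrm{H}_{\mathcal{R}}$ of a semigroup is the supremum of the cardinalities of chains in its poset of $\mathcal{R}$-classes. A right ideal is a non-empty subset $A$ with $AS\subseteq A$; $\mathrm{H}_{\mathcal{R}}(A)$ is computed in $A$ itself. *)

theory Defs
  imports Main "HOL-Library.Extended_Nat"
begin

text \<open>Semigroups are modelled by the type class semigroup_mult; the semigroup S is the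
whole type (UNIV). Green's notions are relativised to a subsemigroup T (closed set),
so that they can be computed inside a right ideal A itself.\<close>

definition right_ideal :: "'a::semigroup_mult set \<Rightarrow> bool" where
  "right_ideal A \<longleftrightarrow> A \<noteq> {} \<and> (\<forall>a\<in>A. \<forall>s. a * s \<in> A)"

definition princ_right :: "'a::semigroup_mult set \<Rightarrow> 'a \<Rightarrow> 'a set" where
  "princ_right T a = insert a ((\<lambda>t. a * t) ` T)"

definition R_le :: "'a::semigroup_mult set \<Rightarrow> 'a \<Rightarrow> 'a \<Rightarrow> bool" where
  "R_le T a b \<longleftrightarrow> princ_right T a \<subseteq> princ_right T b"

definition R_class :: "'a::semigroup_mult set \<Rightarrow> 'a \<Rightarrow> 'a set" where
  "R_class T a = {b \<in> T. R_le T a b \<and> R_le T b a}"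

definition R_classes :: "'a::semigroup_mult set \<Rightarrow> 'a set set" where
  "R_classes T = R_class T ` T"

definition R_class_le :: "'a::semigroup_mult set \<Rightarrow> 'a set \<Rightarrow> 'a set \<Rightarrow> bool" where
  "R_class_le T X Y \<longleftrightarrow> (\<exists>a\<in>X. \<exists>b\<in>Y. R_le T a b)"

definition R_chain :: "'a::semigroup_mult set \<Rightarrow> 'a set set \<Rightarrow> bool" where
  "R_chain T C \<longleftrightarrow> C \<subseteq> R_classes T \<and>
     (\<forall>X\<in>C. \<forall>Y\<in>C. R_class_le T X Y \<or> R_class_le T Y X)"

text \<open>R-height: supremum of cardinalities of chains of R-classes (as an extended natural;
an infinite chain makes the supremum over its finite subchains infinite).\<close>
definition R_height :: "'a::semigroup_mult set \<Rightarrow> enat" where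
  "R_height T = Sup {enat (card C) | C. finite C \<and> R_chain T C}"

end

theory Submission
  imports Defs
begin

text \<open>List the representatives of a chain of \<open>\<R>\<close>-classes of the right ideal \<open>A\<close> from the top,
  \<open>a\<^sub>1 >\<^sub>A a\<^sub>2 >\<^sub>A \<dots> >\<^sub>A a\<^sub>n\<close>. Since \<open>c <\<^sub>A b\<close> means \<open>c = b y\<close> with \<open>y \<in> A\<close>, a further
  step \<open>a \<le>\<^sub>S c\<close> gives \<open>a \<in> b A\<close>, i.e. \<open>a \<le>\<^sub>A b\<close>; hence \<open>a\<^sub>i\<close> and \<open>a\<^sub>i\<^sub>+\<^sub>2\<close> are never
  \<open>\<R>\<close>-related in \<open>S\<close>, and dropping every element that is \<open>\<R>\<close>-related in \<open>S\<close> to its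
  predecessor leaves a strict \<open>\<R>\<close>-chain of \<open>S\<close> with at least half of the elements.
  If the two lowest elements \<open>a\<^sub>n = a\<^sub>n\<^sub>-\<^sub>1 y\<close> collapse in \<open>S\<close>, then \<open>a\<^sub>n y\<close> lies strictly
  below \<open>a\<^sub>n\<close> in \<open>S\<close> and extends the chain. Either way \<open>n + 1 \<le> 2 m\<close> for a chain of
  \<open>m\<close> \<open>\<R>\<close>-classes of \<open>S\<close>.\<close>

lemma R_le_refl: "R_le T a a"
  by (simp add: R_le_def)

lemma R_le_trans: "R_le T a b \<Longrightarrow> R_le T b c \<Longrightarrow> R_le T a c"
  unfolding R_le_def by blast

lemma R_class_eq_iff:
  assumes "a \<in> T" "b \<in> T"
  shows "R_class T a = R_class T b \<longleftrightarrow> R_le T a b \<and> R_le T b a"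
  using assms unfolding R_class_def by (auto intro: R_le_refl R_le_trans)

lemma R_class_le_iff:
  assumes "a \<in> T" "b \<in> T"
  shows "R_class_le T (R_class T a) (R_class T b) \<longleftrightarrow> R_le T a b"
  using assms unfolding R_class_le_def R_class_def by (auto intro: R_le_refl R_le_trans)

definition R_rep_chain :: "'a::semigroup_mult set \<Rightarrow> 'a set \<Rightarrow> bool" where
  "R_rep_chain T P \<longleftrightarrow> (\<forall>x\<in>P. \<forall>y\<in>P. R_le T x y \<or> R_le T y x)
     \<and> (\<forall>x\<in>P. \<forall>y\<in>P. R_le T x y \<and> R_le T y x \<longrightarrow> x = y)"

lemma R_rep_chain_singleton: "R_rep_chain T {a}"
  by (simp add: R_rep_chain_def R_le_refl)

lemma R_rep_chain_subset: "R_rep_chain T P \<Longrightarrow> Q \<subseteq> P \<Longrightarrow> R_rep_chain T Q"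
  unfolding R_rep_chain_def by blast

lemma R_rep_chain_insert_top:
  assumes "R_rep_chain T Q" "\<forall>q\<in>Q. R_le T q a \<and> \<not> R_le T a q"
  shows "R_rep_chain T (insert a Q)"
  using assms unfolding R_rep_chain_def by (auto simp: R_le_refl)

lemma R_rep_chain_has_top:
  assumes "finite P" "P \<noteq> {}" "R_rep_chain T P"
  shows "\<exists>a\<in>P. \<forall>p\<in>P. R_le T p a"
  using assms
proof (induction P rule: finite_ne_induct)
  case (singleton x)
  then show ?case by (simp add: R_le_refl)
next
  case (insert x F)
  have "R_rep_chain T F"
    using insert.prems R_rep_chain_subset by blast
  then obtain m where m: "m \<in> F" "\<forall>p\<in>F. R_le T p m"
    using insert.IH by blast
  show ?case
  proof (cases "R_le T x m")
    case True
    then show ?thesis using m by blast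
  next
    case False
    then have "R_le T m x"
      using insert.prems m(1) unfolding R_rep_chain_def by blast
    then show ?thesis using m R_le_trans R_le_refl by blast
  qed
qed

lemma R_chain_representatives:
  assumes "finite C" "R_chain T C"
  obtains P where "finite P" "R_rep_chain T P" "card P = card C"
proof -
  have "\<forall>X\<in>C. \<exists>r\<in>T. X = R_class T r"
    using assms(2) by (auto simp: R_chain_def R_classes_def)
  then obtain r where r: "\<And>X. X \<in> C \<Longrightarrow> r X \<in> T \<and> X = R_class T (r X)"
    by metis
  have "inj_on r C"
    by (metis inj_onI r)
  moreover have "R_rep_chain T (r ` C)"
    unfolding R_rep_chain_def
  proof (intro conjI ballI impI)
    fix x y assume "x \<in> r ` C" "y \<in> r ` C"
    then obtain X Y where XY: "X \<in> C" "Y \<in> C" "x = r X" "y = r Y" by blast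
    show "R_le T x y \<or> R_le T y x"
      using assms(2) XY r[of X] r[of Y] R_class_le_iff[of x T y] R_class_le_iff[of y T x]
      unfolding R_chain_def by metis
    show "x = y" if "R_le T x y \<and> R_le T y x"
      using that XY r[of X] r[of Y] R_class_eq_iff[of x T y] by metis
  qed
  ultimately show ?thesis
    using that[of "r ` C"] assms(1) card_image by blast
qed

lemma R_chain_of_representatives:
  assumes "R_rep_chain T Q" "Q \<subseteq> T"
  shows "R_chain T (R_class T ` Q)" "card (R_class T ` Q) = card Q"
proof -
  have "R_class_le T (R_class T x) (R_class T y) \<or> R_class_le T (R_class T y) (R_class T x)"
    if "x \<in> Q" "y \<in> Q" for x y
    using assms that R_class_le_iff[of x T y] R_class_le_iff[of y T x]
    unfolding R_rep_chain_def by blast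
  then show "R_chain T (R_class T ` Q)"
    using assms(2) unfolding R_chain_def R_classes_def by blast
  have "inj_on (R_class T) Q"
  proof (rule inj_onI)
    fix x y assume "x \<in> Q" "y \<in> Q" "R_class T x = R_class T y"
    then show "x = y"
      using assms R_class_eq_iff[of x T y] unfolding R_rep_chain_def by blast
  qed
  then show "card (R_class T ` Q) = card Q"
    by (rule card_image)
qed

lemma card_le_R_height:
  assumes "finite Q" "R_rep_chain T Q" "Q \<subseteq> T"
  shows "enat (card Q) \<le> R_height T"
proof -
  let ?C = "R_class T ` Q"
  have "enat (card ?C) \<in> {enat (card C) |C. finite C \<and> R_chain T C}"
    using assms(1) R_chain_of_representatives(1)[OF assms(2,3)] by blast
  then have "enat (card ?C) \<le> R_height T"
    unfolding R_height_def by (rule Sup_upper)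
  then show ?thesis
    using R_chain_of_representatives(2)[OF assms(2,3)] by simp
qed

lemma R_height_le:
  assumes "\<And>P. finite P \<Longrightarrow> P \<noteq> {} \<Longrightarrow> R_rep_chain T P \<Longrightarrow> card P \<le> n"
  shows "R_height T \<le> enat n"
  unfolding R_height_def
proof (rule Sup_least)
  fix k assume "k \<in> {enat (card C) |C. finite C \<and> R_chain T C}"
  then obtain C where C: "k = enat (card C)" "finite C" "R_chain T C"
    by blast
  obtain P where P: "finite P" "R_rep_chain T P" "card P = card C"
    using R_chain_representatives[OF C(2,3)] by blast
  show "k \<le> enat n"
  proof (cases "P = {}")
    case True
    then show ?thesis using C(1) P(3) by (simp add: zero_enat_def[symmetric])
  next
    case False
    then show ?thesis using C(1) P assms[of P] by simp
  qed
qed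

lemma R_le_right_ideal_iff:
  assumes "right_ideal A"
  shows "R_le A a b \<longleftrightarrow> a = b \<or> (\<exists>y\<in>A. a = b * y)"
proof
  assume "R_le A a b"
  then show "a = b \<or> (\<exists>y\<in>A. a = b * y)"
    unfolding R_le_def princ_right_def by blast
next
  assume "a = b \<or> (\<exists>y\<in>A. a = b * y)"
  moreover have "b * y * t \<in> princ_right A b" if "y \<in> A" for y t
    using assms that unfolding right_ideal_def princ_right_def by (auto simp: mult.assoc)
  ultimately show "R_le A a b"
    unfolding R_le_def by (auto simp: princ_right_def)
qed

lemma R_le_UNIV_iff: "R_le UNIV a b \<longleftrightarrow> a = b \<or> (\<exists>s. a = b * s)"
  by (simp add: R_le_right_ideal_iff right_ideal_def)

lemma R_le_UNIV_if_R_le_right_ideal: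
  "right_ideal A \<Longrightarrow> R_le A a b \<Longrightarrow> R_le UNIV a b"
  by (auto simp: R_le_right_ideal_iff R_le_UNIV_iff)

lemma R_le_right_ideal_if_R_le_UNIV_below:
  assumes A: "right_ideal A" and "R_le A c b" "\<not> R_le A b c" "R_le UNIV a c"
  shows "R_le A a b"
proof -
  obtain y where y: "y \<in> A" "c = b * y"
    using assms(2,3) A R_le_refl by (metis R_le_right_ideal_iff)
  consider "a = c" | s where "a = c * s"
    using assms(4) R_le_UNIV_iff by blast
  then show ?thesis
  proof cases
    case 1
    then show ?thesis using y A R_le_right_ideal_iff by blast
  next
    case 2
    then have "a = b * (y * s)" "y * s \<in> A"
      using y A by (auto simp: mult.assoc right_ideal_def)
    then show ?thesis using A R_le_right_ideal_iff by blast
  qed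
qed

lemma ex_R_less_UNIV_if_R_class_splits:
  assumes A: "right_ideal A" and "R_le A c b" "\<not> R_le A b c" "R_le UNIV b c"
  shows "\<exists>d. R_le UNIV d c \<and> \<not> R_le UNIV c d"
proof -
  obtain y where y: "y \<in> A" "c = b * y"
    using assms(2,3) A R_le_refl R_le_right_ideal_iff by metis
  obtain s where s: "b = c * s"
    using assms(3,4) R_le_refl R_le_UNIV_iff by metis
  have "\<not> R_le UNIV c (c * y)"
  proof
    assume "R_le UNIV c (c * y)"
    then obtain z where "z \<in> A" "c = c * z"
      using A y(1) unfolding R_le_UNIV_iff right_ideal_def by (metis mult.assoc)
    then have "b = c * (z * s)" "z * s \<in> A"
      using A s unfolding right_ideal_def by (metis mult.assoc)+
    then show False
      using assms(3) A R_le_right_ideal_iff by blast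
  qed
  moreover have "R_le UNIV (c * y) c"
    by (auto simp: R_le_UNIV_iff)
  ultimately show ?thesis by blast
qed

lemma R_rep_chain_right_ideal_peel_top:
  assumes A: "right_ideal A" and P: "finite P" "R_rep_chain A P"
    and a: "a \<in> P" "\<forall>p\<in>P. R_le A p a" and "P \<noteq> {a}"
  obtains R t where "finite R" "R_rep_chain A R" "card R < card P" "card P \<le> card R + 2"
    "t \<in> R" "\<forall>r\<in>R. R_le A r t" "R_le UNIV t a" "\<not> R_le UNIV a t"
proof -
  let ?P' = "P - {a}"
  have chain_P': "R_rep_chain A ?P'"
    by (rule R_rep_chain_subset[OF P(2)]) blast
  obtain b where b: "b \<in> ?P'" "\<forall>p\<in>?P'. R_le A p b"
    using R_rep_chain_has_top[OF _ _ chain_P'] P(1) a(1) assms(6) by blast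
  have ba: "R_le A b a" "\<not> R_le A a b"
    using a b P(2) unfolding R_rep_chain_def by blast+
  have ba_UNIV: "R_le UNIV b a"
    using R_le_UNIV_if_R_le_right_ideal[OF A ba(1)] .
  have card_P': "card P = card ?P' + 1"
    using card.remove[OF P(1) a(1)] by simp
  show thesis
  proof (cases "R_le UNIV a b")
    case False
    show thesis
    proof (rule that[of ?P' b])
      show "card ?P' < card P" "card P \<le> card ?P' + 2"
        using card_P' by simp_all
    qed (use P(1) chain_P' b ba_UNIV False in \<open>simp_all\<close>)
  next
    case True
    let ?P'' = "?P' - {b}"
    have chain_P'': "R_rep_chain A ?P''"
      by (rule R_rep_chain_subset[OF P(2)]) blast
    have card_P'': "card P = card ?P'' + 2"
      using card_P' card.remove[of ?P' b] P(1) b(1) by simp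
    show thesis
    proof (cases "?P'' = {}")
      case True
      \<comment> \<open>here \<open>R\<close> is not a subset of \<open>P\<close>: it is a new element strictly below \<open>b\<close> in \<open>S\<close>\<close>
      obtain d where d: "R_le UNIV d b" "\<not> R_le UNIV b d"
        using ex_R_less_UNIV_if_R_class_splits[OF A ba \<open>R_le UNIV a b\<close>] by blast
      show thesis
      proof (rule that[of "{d}" d])
        show "card {d} < card P" "card P \<le> card {d} + 2"
          using card_P''[unfolded True] by simp_all
        show "R_le UNIV d a"
          using d(1) ba_UNIV by (rule R_le_trans)
        show "\<not> R_le UNIV a d"
          using d(2) R_le_trans[OF ba_UNIV] by blast
      qed (simp_all add: R_rep_chain_singleton R_le_refl)
    next
      case False
      obtain c where c: "c \<in> ?P''" "\<forall>p\<in>?P''. R_le A p c"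
        using R_rep_chain_has_top[OF _ False chain_P''] P(1) by blast
      have cb: "R_le A c b" "\<not> R_le A b c"
        using b c P(2) unfolding R_rep_chain_def by blast+
      show thesis
      proof (rule that[of ?P'' c])
        show "card ?P'' < card P" "card P \<le> card ?P'' + 2"
          using card_P'' by simp_all
        show "\<not> R_le UNIV a c"
          using R_le_right_ideal_if_R_le_UNIV_below[OF A cb] ba(2) by blast
        show "R_le UNIV c a"
          using R_le_UNIV_if_R_le_right_ideal[OF A cb(1)] ba_UNIV by (rule R_le_trans)
      qed (use P(1) chain_P'' c in \<open>simp_all\<close>)
    qed
  qed
qed

lemma right_ideal_rep_chain_lifts_to_UNIV:
  assumes A: "right_ideal A"
  shows "finite P \<Longrightarrow> R_rep_chain A P \<Longrightarrow> a \<in> P \<Longrightarrow> \<forall>p\<in>P. R_le A p a \<Longrightarrow>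
    \<exists>Q. finite Q \<and> R_rep_chain UNIV Q \<and> card P + 1 \<le> 2 * card Q \<and> (\<forall>q\<in>Q. R_le UNIV q a)"
proof (induction "card P" arbitrary: P a rule: less_induct)
  case less
  show ?case
  proof (cases "P = {a}")
    case True
    then show ?thesis
      by (intro exI[of _ "{a}"]) (simp add: R_rep_chain_singleton R_le_refl)
  next
    case False
    obtain R t where R: "finite R" "R_rep_chain A R" "card R < card P" "card P \<le> card R + 2"
      "t \<in> R" "\<forall>r\<in>R. R_le A r t" "R_le UNIV t a" "\<not> R_le UNIV a t"
      using R_rep_chain_right_ideal_peel_top[OF A less.prems False] by blast
    obtain Q where Q: "finite Q" "R_rep_chain UNIV Q" "card R + 1 \<le> 2 * card Q"
      "\<forall>q\<in>Q. R_le UNIV q t"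
      using less.hyps[OF R(3) R(1,2,5,6)] by blast
    have below: "\<forall>q\<in>Q. R_le UNIV q a \<and> \<not> R_le UNIV a q"
      using Q(4) R(7,8) R_le_trans by metis
    then have "card (insert a Q) = card Q + 1"
      using Q(1) R_le_refl by fastforce
    then show ?thesis
      using Q R(4) below R_rep_chain_insert_top[OF Q(2) below] R_le_refl
      by (intro exI[of _ "insert a Q"]) auto
  qed
qed

theorem corollary3p7:
  fixes A :: "'a::semigroup_mult set"
  assumes "R_height (UNIV :: 'a set) \<noteq> \<infinity>"
    and "right_ideal A"
  shows "R_height A \<le> 2 * R_height (UNIV :: 'a set) - 1"
proof -
  obtain N where N: "R_height (UNIV :: 'a set) = enat N"
    using assms(1) by (cases "R_height (UNIV :: 'a set)") simp_all
  have "card P \<le> 2 * N - 1" if P: "finite P" "P \<noteq> {}" "R_rep_chain A P" for P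
  proof -
    obtain a where "a \<in> P" "\<forall>p\<in>P. R_le A p a"
      using R_rep_chain_has_top[OF P] by blast
    then obtain Q :: "'a set" where Q: "finite Q" "R_rep_chain UNIV Q" "card P + 1 \<le> 2 * card Q"
      using right_ideal_rep_chain_lifts_to_UNIV[OF assms(2) P(1,3)] by blast
    have "card Q \<le> N"
      using card_le_R_height[OF Q(1,2)] N by simp
    then show ?thesis
      using Q(3) by linarith
  qed
  then have "R_height A \<le> enat (2 * N - 1)"
    by (rule R_height_le)
  also have "\<dots> = 2 * R_height (UNIV :: 'a set) - 1"
    using N by (simp add: numeral_eq_enat one_enat_def)
  finally show ?thesis .
qed

end
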